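(* Let $F$ be a field of characteristic different from $2$ and $3$, let $A$ be the free associative $F$-algebra without unity on free generators $x,y$, let $I$ be the two-sided ideal of $A$ generated by the following elements: (i) all monomials of degree $8$; (ii) all monomials of degree greater than $2$ in $x$; (iii) all monic monomials of degree $7$ except $yxy^3xy$ and $y^2xyxy^2$; (iv) all monic monomials of degree less than $7$ which do not divide either of the monomials $yxy^3xy$ and $y^2xyxy^2$; (v) the polynomial $2xy^3xy-5yxyxy^2-2yxy^3x+5y^2xyxy$; (vi) the polynomial $2yxy^3xy-5y^2xyxy^2$; and let $B=A/I$. Then the Lie algebra $[B]$ is $5$-Engel, but the adjoint group $B^\circ$ is not a $5$-Engel group.
   Context: For monic monomials $m,n$ in $x,y$, $m$ divides $n$ if $n=m_1 m m_2$ for some monic monomials $m_1,m_2$ (possibly empty, i.e. equal to $1$). For an associative algebra $B$ (possibly without unity), $[B]$ denotes the Lie algebra with bracket $[a,b]=ab-ba$. The adjoint multiplication on $B$ is $u\circ v=u+v+uv$; $(B,\circ)$ is a monoid with identity $0$, and its group of units is the adjoint group $B^\circ$ (here $B^8=0$, so $B^\circ=B$). Set $[x,{}_{(1)}y]=[x,y]$, $[x,{}_{(k+1)}y]=[[x,{}_{(k)}y],y]$; a Lie algebra $L$ is $n$-Engel if $[u,{}_{(n)}v]=0$ for all $u,v\in L$. For a group, $(x,y)=x^{-1}y^{-1}xy$, $(x,{}_{(k+1)}y)=((x,{}_{(k)}y),y)$; a group $G$ is $n$-Engel if $(u,{}_{(n)}v)=1$ for all $u,v\in G$. *)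

theory Defs
  imports "HOL-Library.Poly_Mapping" "HOL-Algebra.Group"
begin

datatype gen = X | Y

type_synonym 'a ncpoly = "gen list \<Rightarrow>\<^sub>0 'a"

text \<open>Elements of the free associative algebra with unity are finitely supported
 functions from words to coefficients; the free algebra without unity A is the
 subspace of those with zero constant term (coefficient of the empty word).\<close>

definition ncA :: "'a::field ncpoly set" where
  "ncA = {p. Poly_Mapping.lookup p [] = 0}"

definition ncmult :: "'a::field ncpoly \<Rightarrow> 'a ncpoly \<Rightarrow> 'a ncpoly" where
  "ncmult p q = (\<Sum>u\<in>Poly_Mapping.keys p. \<Sum>v\<in>Poly_Mapping.keys q.
      Poly_Mapping.single (u @ v) (Poly_Mapping.lookup p u * Poly_Mapping.lookup q v))"

definition ncsmult :: "'a::field \<Rightarrow> 'a ncpoly \<Rightarrow> 'a ncpoly" where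
  "ncsmult c p = Poly_Mapping.map (\<lambda>a. c * a) p"

definition mono :: "gen list \<Rightarrow> 'a::field ncpoly" where
  "mono w = Poly_Mapping.single w 1"

inductive_set ideal_gen :: "'a::field ncpoly set \<Rightarrow> 'a ncpoly set" for G where
  gen: "g \<in> G \<Longrightarrow> g \<in> ideal_gen G"
| zero: "0 \<in> ideal_gen G"
| add: "a \<in> ideal_gen G \<Longrightarrow> b \<in> ideal_gen G \<Longrightarrow> a + b \<in> ideal_gen G"
| smult: "a \<in> ideal_gen G \<Longrightarrow> ncsmult c a \<in> ideal_gen G"
| lmult: "a \<in> ideal_gen G \<Longrightarrow> r \<in> ncA \<Longrightarrow> ncmult r a \<in> ideal_gen G"
| rmult: "a \<in> ideal_gen G \<Longrightarrow> r \<in> ncA \<Longrightarrow> ncmult a r \<in> ideal_gen G"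

definition wdvd :: "gen list \<Rightarrow> gen list \<Rightarrow> bool" where
  "wdvd m n \<longleftrightarrow> (\<exists>m1 m2. n = m1 @ m @ m2)"

definition xdeg :: "gen list \<Rightarrow> nat" where
  "xdeg w = length (filter (\<lambda>g. g = X) w)"

definition w1 :: "gen list" where "w1 = [Y,X,Y,Y,Y,X,Y]"
definition w2 :: "gen list" where "w2 = [Y,Y,X,Y,X,Y,Y]"

definition pol5 :: "'a::field ncpoly" where
  "pol5 = Poly_Mapping.single [X,Y,Y,Y,X,Y] 2 - Poly_Mapping.single [Y,X,Y,X,Y,Y] 5
        - Poly_Mapping.single [Y,X,Y,Y,Y,X] 2 + Poly_Mapping.single [Y,Y,X,Y,X,Y] 5"

definition pol6 :: "'a::field ncpoly" where
  "pol6 = Poly_Mapping.single w1 2 - Poly_Mapping.single w2 5"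

definition gensI :: "'a::field ncpoly set" where
  "gensI =
     {mono w | w. length w = 8}
   \<union> {mono w | w. 2 < xdeg w}
   \<union> {mono w | w. length w = 7 \<and> w \<noteq> w1 \<and> w \<noteq> w2}
   \<union> {mono w | w. w \<noteq> [] \<and> length w < 7 \<and> \<not> wdvd w w1 \<and> \<not> wdvd w w2}
   \<union> {pol5, pol6}"

definition ncI :: "'a::field ncpoly set" where
  "ncI = ideal_gen gensI"

definition lbr :: "'a::field ncpoly \<Rightarrow> 'a ncpoly \<Rightarrow> 'a ncpoly" where
  "lbr a b = ncmult a b - ncmult b a"

primrec lie_eng :: "nat \<Rightarrow> 'a::field ncpoly \<Rightarrow> 'a ncpoly \<Rightarrow> 'a ncpoly" where
  "lie_eng 0 u v = u"
| "lie_eng (Suc k) u v = lbr (lie_eng k u v) v"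

definition clsI :: "'a::field ncpoly \<Rightarrow> 'a ncpoly set" where
  "clsI a = (\<lambda>i. a + i) ` ncI"

definition Bset :: "'a::field ncpoly set set" where
  "Bset = clsI ` ncA"

definition circ :: "'a::field ncpoly \<Rightarrow> 'a ncpoly \<Rightarrow> 'a ncpoly" where
  "circ u v = u + v + ncmult u v"

definition adjB :: "'a::field ncpoly set monoid" where
  "adjB = \<lparr> carrier = Bset,
            mult = (\<lambda>S T. clsI (circ (SOME a. a \<in> S) (SOME b. b \<in> T))),
            one = clsI 0 \<rparr>"

definition adjGroup :: "'a::field ncpoly set monoid" where
  "adjGroup = units_of adjB"

definition gcomm :: "('g, 'b) monoid_scheme \<Rightarrow> 'g \<Rightarrow> 'g \<Rightarrow> 'g" where
  "gcomm G a b = inv\<^bsub>G\<^esub> a \<otimes>\<^bsub>G\<^esub> inv\<^bsub>G\<^esub> b \<otimes>\<^bsub>G\<^esub> a \<otimes>\<^bsub>G\<^esub> b"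

primrec grp_eng :: "('g, 'b) monoid_scheme \<Rightarrow> nat \<Rightarrow> 'g \<Rightarrow> 'g \<Rightarrow> 'g" where
  "grp_eng G 0 a b = a"
| "grp_eng G (Suc k) a b = gcomm G (grp_eng G k a b) b"

definition engel_group :: "('g, 'b) monoid_scheme \<Rightarrow> nat \<Rightarrow> bool" where
  "engel_group G n \<longleftrightarrow> (\<forall>u\<in>carrier G. \<forall>v\<in>carrier G. grp_eng G n u v = \<one>\<^bsub>G\<^esub>)"

definition engel_lieB :: "'a::field itself \<Rightarrow> nat \<Rightarrow> bool" where
  "engel_lieB _ n \<longleftrightarrow> (\<forall>u\<in>(ncA :: 'a ncpoly set). \<forall>v\<in>ncA. lie_eng n u v \<in> ncI)"

end

theory Submission
  imports Defs "HOL-Library.Sublist"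
begin

text \<open>
  Modulo \<open>I\<close>, every word that is not a factor of \<open>w1\<close> or \<open>w2\<close> vanishes, and a
  polynomial lies in \<open>I\<close> exactly when its coefficients on these factors satisfy a few
  linear conditions: they vanish on the factors of length at most 5, and on the remaining
  six factors they are proportional to the coefficients of (v) and (vi).  These
  conditions are stable under the ideal operations, hold for the generators, and
  (using \<open>2 \<noteq> 0\<close>) every polynomial satisfying them is a combination of generators.

  Expanding \<open>[u,\<^sub>5 v]\<close> coefficientwise shows that it satisfies the conditions for all
  \<open>u, v\<close>, so \<open>[B]\<close> is 5-Engel.  On the other hand, computing in the finite-dimensional
  algebra \<open>B\<close> (where the adjoint inverse of \<open>a\<close> is \<open>-a + a\<^sup>2 - \<dots> - a\<^sup>7\<close>), the fifth
  group commutator of the classes of \<open>x\<close> and \<open>y\<close> is the class of \<open>6 y\<^sup>2xyxy\<^sup>2\<close>, which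
  violates the condition \<open>5 c\<^sub>w\<^sub>1 + 2 c\<^sub>w\<^sub>2 = 0\<close> because \<open>12 \<noteq> 0\<close> when the
  characteristic is neither 2 nor 3.
\<close>

section \<open>The free algebra as a monoid algebra of words\<close>

text \<open>With concatenation as the monoid operation on words, the convolution product on
  \<open>gen list \<Rightarrow>\<^sub>0 'a\<close> is the product of the free algebra.\<close>

instantiation list :: (type) monoid_add
begin
definition zero_list :: "'a list" where "zero_list = []"
definition plus_list :: "'a list \<Rightarrow> 'a list \<Rightarrow> 'a list" where "plus_list a b = a @ b"
instance by standard (auto simp: zero_list_def plus_list_def)
end

abbreviation coeff :: "'a::field ncpoly \<Rightarrow> gen list \<Rightarrow> 'a" where
  "coeff \<equiv> Poly_Mapping.lookup"

lemma poly_mapping_sum_single: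
  "(p::'a::field ncpoly) = (\<Sum>u\<in>Poly_Mapping.keys p. Poly_Mapping.single u (coeff p u))"
  by (rule poly_mapping_eqI) (auto simp: lookup_sum lookup_single when_def in_keys_iff)

lemma ncmult_eq_times: "ncmult p q = p * q"
proof -
  have "p * q = (\<Sum>u\<in>Poly_Mapping.keys p. Poly_Mapping.single u (coeff p u))
              * (\<Sum>v\<in>Poly_Mapping.keys q. Poly_Mapping.single v (coeff q v))"
    by (metis poly_mapping_sum_single)
  also have "\<dots> = ncmult p q"
    by (simp add: ncmult_def sum_distrib_left sum_distrib_right mult_single plus_list_def)
      (rule sum.swap)
  finally show ?thesis by simp
qed

lemma coeff_times:
  "coeff ((p::'a::field ncpoly) * q) w = (\<Sum>i\<le>length w. coeff p (take i w) * coeff q (drop i w))"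
proof -
  let ?S = "(\<lambda>i. (take i w, drop i w)) ` {..length w}"
  let ?f = "\<lambda>(u,v). coeff p u * coeff q v"
  let ?K = "{x \<in> Poly_Mapping.keys p \<times> Poly_Mapping.keys q. fst x @ snd x = w}"
  have "(u, v) \<in> ?S" if "u @ v = w" for u v
    using that by (auto intro!: image_eqI[of _ _ "length u"])
  then have S: "?S = {(u,v). u @ v = w}" by auto
  have "coeff (p*q) w = (\<Sum>u\<in>Poly_Mapping.keys p. \<Sum>v\<in>Poly_Mapping.keys q.
                           (if u@v = w then coeff p u * coeff q v else 0))"
    by (simp add: ncmult_eq_times[symmetric] ncmult_def lookup_sum lookup_single when_def eq_commute)
  also have "\<dots> = (\<Sum>x\<in>?K. ?f x)"
    by (simp add: sum.cartesian_product, subst sum.inter_filter) (auto simp: split_beta intro!: sum.cong)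
  also have "\<dots> = sum ?f ?S"
    by (rule sum.mono_neutral_left) (simp, auto simp: S in_keys_iff)
  also have "\<dots> = (\<Sum>i\<le>length w. coeff p (take i w) * coeff q (drop i w))"
    by (subst sum.reindex) (auto simp: inj_on_def intro!: sum.cong dest: arg_cong[of _ _ length])
  finally show ?thesis .
qed

text \<open>The splittings of \<open>c # w\<close> into two nonempty words, as a recursion that the
  simplifier can unfold on explicit words.\<close>

fun proper_split_sum :: "'a::field ncpoly \<Rightarrow> 'a ncpoly \<Rightarrow> gen list \<Rightarrow> gen list \<Rightarrow> 'a" where
  "proper_split_sum p q a [] = 0"
| "proper_split_sum p q a (d#w) = coeff p a * coeff q (d#w) + proper_split_sum p q (a@[d]) w"

lemma proper_split_sum_eq:
  "proper_split_sum p q a w = (\<Sum>i<length w. coeff p (a @ take i w) * coeff q (drop i w))"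
  by (induction w arbitrary: a) (simp_all del: sum.lessThan_Suc add: sum.lessThan_Suc_shift)

lemma coeff_times_Nil: "p \<in> ncA \<Longrightarrow> coeff (p * q) [] = 0"
  by (simp add: coeff_times ncA_def)

lemma coeff_times_Cons:
  assumes p: "p \<in> ncA" and q: "q \<in> ncA"
  shows "coeff (p * q) (c#w) = proper_split_sum p q [c] w"
proof -
  have "coeff (p*q) (c#w) = (\<Sum>i\<le>length w. coeff p (c # take i w) * coeff q (drop i w))"
    using p by (simp del: sum.atMost_Suc add: coeff_times sum.atMost_Suc_shift ncA_def)
  also have "\<dots> = (\<Sum>i<length w. coeff p (c # take i w) * coeff q (drop i w))"
    using q by (simp add: sum.atMost_Suc lessThan_Suc_atMost[symmetric] ncA_def)
  finally show ?thesis by (simp add: proper_split_sum_eq)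
qed

lemma ncA_zero: "0 \<in> ncA"
  by (simp add: ncA_def)
lemma ncA_add: "p \<in> ncA \<Longrightarrow> q \<in> ncA \<Longrightarrow> p + q \<in> ncA"
  by (simp add: ncA_def lookup_add)
lemma ncA_uminus: "p \<in> ncA \<Longrightarrow> - p \<in> ncA"
  by (simp add: ncA_def)
lemma ncA_diff: "p \<in> ncA \<Longrightarrow> q \<in> ncA \<Longrightarrow> p - q \<in> ncA"
  by (simp add: ncA_def lookup_minus)
lemma ncA_times: "p \<in> ncA \<Longrightarrow> p * q \<in> ncA"
  by (simp add: ncA_def coeff_times_Nil)
lemma mono_in_ncA: "w \<noteq> [] \<Longrightarrow> mono w \<in> ncA"
  by (simp add: ncA_def mono_def lookup_single)

lemma coeff_mono: "coeff (mono w) v = (if w = v then 1 else 0)"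
  by (simp add: mono_def lookup_single when_def)
lemma coeff_ncsmult: "coeff (ncsmult c p) w = c * coeff p w"
  by (simp add: ncsmult_def map.rep_eq when_def)
lemma single_eq_ncsmult_mono: "Poly_Mapping.single u c = ncsmult c (mono u)"
  by (simp add: ncsmult_def mono_def)
lemma ncsmult_minus_one: "ncsmult (-1) a = - a"
  by (rule poly_mapping_eqI) (simp add: coeff_ncsmult)

lemma lbr_eq: "lbr a b = a * b - b * a"
  by (simp add: lbr_def ncmult_eq_times)
lemma lie_eng_in_ncA: "u \<in> ncA \<Longrightarrow> v \<in> ncA \<Longrightarrow> lie_eng k u v \<in> ncA"
  by (induction k) (auto simp: lbr_eq intro!: ncA_diff ncA_times)

section \<open>Factors of \<open>w1\<close> and \<open>w2\<close>\<close>

definition factor_w12 :: "gen list \<Rightarrow> bool" where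
  "factor_w12 w \<longleftrightarrow> wdvd w w1 \<or> wdvd w w2"

definition factors_w12 :: "gen list list" where
  "factors_w12 =
    [[X], [Y], [X,Y], [Y,X], [Y,Y], [X,Y,X], [X,Y,Y], [Y,X,Y], [Y,Y,X], [Y,Y,Y],
     [X,Y,X,Y], [X,Y,Y,Y], [Y,X,Y,X], [Y,X,Y,Y], [Y,Y,X,Y], [Y,Y,Y,X],
     [X,Y,X,Y,Y], [X,Y,Y,Y,X], [Y,X,Y,X,Y], [Y,X,Y,Y,Y], [Y,Y,X,Y,X], [Y,Y,Y,X,Y],
     [X,Y,Y,Y,X,Y], [Y,X,Y,X,Y,Y], [Y,X,Y,Y,Y,X], [Y,Y,X,Y,X,Y], w1, w2]"

definition short_factors_w12 :: "gen list list" where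
  "short_factors_w12 = filter (\<lambda>w. length w \<le> 5) factors_w12"

lemma factor_w12_iff: "factor_w12 w \<longleftrightarrow> w = [] \<or> w \<in> set factors_w12"
proof -
  have "set (sublists w1) \<union> set (sublists w2) = insert [] (set factors_w12)"
    by (simp add: w1_def w2_def factors_w12_def insert_commute)
  then show ?thesis
    unfolding factor_w12_def wdvd_def sublist_def[symmetric] by (metis Un_iff in_set_sublists insert_iff)
qed

lemma distinct_factors_w12: "distinct factors_w12"
  by (simp add: factors_w12_def w1_def w2_def)

lemma length_factor_w12: "factor_w12 w \<Longrightarrow> length w \<le> 7"
  by (auto simp: factor_w12_iff factors_w12_def w1_def w2_def)
lemma xdeg_factor_w12: "factor_w12 w \<Longrightarrow> xdeg w \<le> 2"
  by (auto simp: factor_w12_iff factors_w12_def w1_def w2_def xdeg_def)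
lemma factor_w12_length_7: "factor_w12 w \<Longrightarrow> length w = 7 \<Longrightarrow> w = w1 \<or> w = w2"
  by (auto simp: factor_w12_iff factors_w12_def w1_def w2_def)
lemma factor_w12_w1_w2_Nil: "factor_w12 w1" "factor_w12 w2" "factor_w12 []"
  by (auto simp: factor_w12_iff factors_w12_def)

lemma set_factors_w12:
  "set factors_w12 = set short_factors_w12 \<union>
     {[X,Y,Y,Y,X,Y], [Y,X,Y,X,Y,Y], [Y,X,Y,Y,Y,X], [Y,Y,X,Y,X,Y], w1, w2}"
  by (auto simp: short_factors_w12_def factors_w12_def w1_def w2_def)

section \<open>A coefficientwise description of the ideal \<open>I\<close>\<close>

text \<open>The coefficients on \<open>xy\<^sup>3xy, yxyxy\<^sup>2, yxy\<^sup>3x, y\<^sup>2xyxy\<close> (resp. \<open>w1, w2\<close>) are required to be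
  proportional to those of (v) (resp. (vi)).\<close>

definition I_coeff_conds :: "'a::field ncpoly \<Rightarrow> bool" where
  "I_coeff_conds p \<longleftrightarrow> coeff p [] = 0 \<and> (\<forall>w\<in>set short_factors_w12. coeff p w = 0)
     \<and> coeff p [Y,X,Y,Y,Y,X] = - coeff p [X,Y,Y,Y,X,Y]
     \<and> coeff p [Y,Y,X,Y,X,Y] = - coeff p [Y,X,Y,X,Y,Y]
     \<and> 5 * coeff p [X,Y,Y,Y,X,Y] + 2 * coeff p [Y,X,Y,X,Y,Y] = 0
     \<and> 5 * coeff p [Y,X,Y,Y,Y,X,Y] + 2 * coeff p [Y,Y,X,Y,X,Y,Y] = 0"

lemma I_coeff_conds_in_ncA: "I_coeff_conds p \<Longrightarrow> p \<in> ncA"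
  by (simp add: I_coeff_conds_def ncA_def)

lemma I_coeff_conds_if_vanish_on_factors:
  assumes "\<And>w. factor_w12 w \<Longrightarrow> coeff p w = 0"
  shows "I_coeff_conds p"
proof -
  have "\<forall>w\<in>set factors_w12. coeff p w = 0" "coeff p [] = 0"
    using assms factor_w12_iff by blast+
  then show ?thesis
    unfolding I_coeff_conds_def by (simp add: set_factors_w12 w1_def w2_def)
qed

lemma I_coeff_conds_add:
  assumes "I_coeff_conds p" "I_coeff_conds q"
  shows "I_coeff_conds (p + q)"
proof -
  have regroup: "5 * (a + c) + 2 * (b + d) = (5 * a + 2 * b) + (5 * c + 2 * d)" for a b c d :: 'a
    by (simp add: algebra_simps)
  show ?thesis using assms unfolding I_coeff_conds_def lookup_add regroup by auto
qed

lemma I_coeff_conds_ncsmult: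
  assumes "I_coeff_conds p"
  shows "I_coeff_conds (ncsmult c p)"
proof -
  have factor: "5 * (c * a) + 2 * (c * b) = c * (5 * a + 2 * b)" for a b :: 'a
    by (simp add: algebra_simps)
  show ?thesis using assms unfolding I_coeff_conds_def coeff_ncsmult factor by auto
qed

text \<open>In \<open>r * p\<close> and \<open>p * r\<close> every coefficient on a factor of length at most 6 only involves
  coefficients of \<open>p\<close> on shorter factors, which vanish; on \<open>w1 = y \<cdot> xy\<^sup>3xy\<close> and
  \<open>w2 = y \<cdot> yxyxy\<^sup>2\<close> (resp. \<open>w1 = yxy\<^sup>3x \<cdot> y\<close>, \<open>w2 = y\<^sup>2xyxy \<cdot> y\<close>) the degree 6 relations
  of \<open>p\<close> propagate.\<close>

lemma I_coeff_conds_times_left: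
  assumes r: "r \<in> ncA" and p: "I_coeff_conds p"
  shows "I_coeff_conds (r * p)"
proof -
  have "p \<in> ncA" using p by (rule I_coeff_conds_in_ncA)
  moreover have "5 * (c * a) + 2 * (c * b) = c * (5 * a + 2 * b)" for a b c :: 'a
    by (simp add: algebra_simps)
  ultimately show ?thesis
    using p r by (simp add: I_coeff_conds_def short_factors_w12_def factors_w12_def
        w1_def w2_def coeff_times_Cons coeff_times_Nil)
qed

lemma I_coeff_conds_times_right:
  assumes r: "r \<in> ncA" and p: "I_coeff_conds p"
  shows "I_coeff_conds (p * r)"
proof -
  have "p \<in> ncA" using p by (rule I_coeff_conds_in_ncA)
  moreover have "5 * (- (a * c)) + 2 * (- (b * c)) = - ((5 * a + 2 * b) * c)" for a b c :: 'a
    by (simp add: algebra_simps)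
  ultimately show ?thesis
    using p r by (simp add: I_coeff_conds_def short_factors_w12_def factors_w12_def
        w1_def w2_def coeff_times_Cons coeff_times_Nil)
qed

lemma I_coeff_conds_pol5: "I_coeff_conds pol5"
  by (simp add: I_coeff_conds_def short_factors_w12_def factors_w12_def w1_def w2_def
      pol5_def lookup_add lookup_minus lookup_single)

lemma I_coeff_conds_pol6: "I_coeff_conds pol6"
  by (simp add: I_coeff_conds_def short_factors_w12_def factors_w12_def w1_def w2_def
      pol6_def lookup_add lookup_minus lookup_single)

lemma I_coeff_conds_gensI:
  assumes "g \<in> gensI"
  shows "I_coeff_conds g"
proof -
  have mono: "I_coeff_conds (mono w)" if "\<not> factor_w12 w" for w
    using that by (intro I_coeff_conds_if_vanish_on_factors) (auto simp: coeff_mono)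
  from assms consider
      (long) w where "g = mono w" "length w = 8"
    | (xdeg) w where "g = mono w" "2 < xdeg w"
    | (deg7) w where "g = mono w" "length w = 7" "w \<noteq> w1" "w \<noteq> w2"
    | (short) w where "g = mono w" "\<not> wdvd w w1" "\<not> wdvd w w2"
    | "g = pol5" | "g = pol6"
    unfolding gensI_def by blast
  then show ?thesis
  proof cases
    case long
    then show ?thesis by (auto intro!: mono dest: length_factor_w12)
  next
    case xdeg
    then show ?thesis by (auto intro!: mono dest: xdeg_factor_w12)
  next
    case deg7
    then show ?thesis by (auto intro!: mono dest: factor_w12_length_7)
  next
    case short
    then show ?thesis by (auto intro!: mono simp: factor_w12_def)
  qed (simp_all add: I_coeff_conds_pol5 I_coeff_conds_pol6)
qed

lemma I_coeff_conds_if_in_ncI: "p \<in> ncI \<Longrightarrow> I_coeff_conds p"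
  unfolding ncI_def
proof (induction rule: ideal_gen.induct)
  case zero
  then show ?case by (simp add: I_coeff_conds_def)
qed (simp_all add: I_coeff_conds_gensI I_coeff_conds_add I_coeff_conds_ncsmult
    ncmult_eq_times I_coeff_conds_times_left I_coeff_conds_times_right)

lemma ncI_subset_ncA: "p \<in> ncI \<Longrightarrow> p \<in> ncA"
  by (intro I_coeff_conds_in_ncA I_coeff_conds_if_in_ncI)

lemma ncI_zero: "0 \<in> ncI"
  unfolding ncI_def by (rule ideal_gen.zero)
lemma ncI_add: "a \<in> ncI \<Longrightarrow> b \<in> ncI \<Longrightarrow> a + b \<in> ncI"
  unfolding ncI_def by (rule ideal_gen.add)
lemma ncI_ncsmult: "a \<in> ncI \<Longrightarrow> ncsmult c a \<in> ncI"
  unfolding ncI_def by (rule ideal_gen.smult)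
lemma ncI_uminus: "a \<in> ncI \<Longrightarrow> - a \<in> ncI"
  using ncI_ncsmult[of a "-1"] by (simp add: ncsmult_minus_one)
lemma ncI_diff: "a \<in> ncI \<Longrightarrow> b \<in> ncI \<Longrightarrow> a - b \<in> ncI"
  by (metis ncI_add ncI_uminus diff_conv_add_uminus)
lemma ncI_times_left: "a \<in> ncI \<Longrightarrow> r \<in> ncA \<Longrightarrow> r * a \<in> ncI"
  unfolding ncI_def ncmult_eq_times[symmetric] by (rule ideal_gen.lmult)
lemma ncI_times_right: "a \<in> ncI \<Longrightarrow> r \<in> ncA \<Longrightarrow> a * r \<in> ncI"
  unfolding ncI_def ncmult_eq_times[symmetric] by (rule ideal_gen.rmult)
lemma ncI_gensI: "g \<in> gensI \<Longrightarrow> g \<in> ncI"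
  unfolding ncI_def by (rule ideal_gen.gen)
lemma ncI_sum: "finite S \<Longrightarrow> (\<And>x. x \<in> S \<Longrightarrow> f x \<in> ncI) \<Longrightarrow> sum f S \<in> ncI"
  by (induction S rule: finite_induct) (auto intro: ncI_add ncI_zero)

lemma mono_in_ncI:
  assumes "w \<noteq> []" "\<not> factor_w12 w"
  shows "mono w \<in> ncI"
proof (cases "length w \<ge> 8")
  case True
  define a where "a = take (length w - 8) w"
  define b where "b = drop (length w - 8) w"
  have w: "w = a @ b" and "length b = 8"
    using True by (auto simp: a_def b_def)
  then have b: "mono b \<in> ncI" by (intro ncI_gensI) (auto simp: gensI_def)
  show ?thesis
  proof (cases "a = []")
    case True
    then show ?thesis using w b by simp
  next
    case False
    have "mono w = (mono a * mono b :: 'a::field ncpoly)" by (simp add: w mono_def mult_single plus_list_def)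
    with ncI_times_left[OF b mono_in_ncA[OF False]] show ?thesis by (simp only:)
  qed
next
  case False
  then consider "length w = 7" | "length w < 7" by linarith
  then show ?thesis
  proof cases
    case 1
    moreover have "w \<noteq> w1" "w \<noteq> w2" using assms factor_w12_w1_w2_Nil by auto
    ultimately show ?thesis by (intro ncI_gensI) (auto simp: gensI_def)
  next
    case 2
    then show ?thesis using assms by (intro ncI_gensI) (auto simp: gensI_def factor_w12_def)
  qed
qed

lemma ncI_if_vanish_on_factors:
  assumes "\<And>w. factor_w12 w \<Longrightarrow> coeff q w = 0"
  shows "q \<in> ncI"
proof -
  have "(\<Sum>u\<in>Poly_Mapping.keys q. Poly_Mapping.single u (coeff q u)) \<in> ncI"
  proof (rule ncI_sum)
    fix u assume "u \<in> Poly_Mapping.keys q"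
    then have "\<not> factor_w12 u" "u \<noteq> []"
      using assms factor_w12_w1_w2_Nil(3) by (auto simp: in_keys_iff)
    then show "Poly_Mapping.single u (coeff q u) \<in> ncI"
      unfolding single_eq_ncsmult_mono by (intro ncI_ncsmult mono_in_ncI)
  qed simp
  then show ?thesis by (simp flip: poly_mapping_sum_single)
qed

text \<open>Subtracting suitable multiples of (v) and (vi) kills all coefficients on factors;
  the multiples are found by dividing by the coefficient 2 of \<open>xy\<^sup>3xy\<close> and \<open>w1\<close>.\<close>

lemma ncI_if_I_coeff_conds:
  assumes two: "(2::'a::field) \<noteq> 0" and p: "I_coeff_conds (p::'a ncpoly)"
  shows "p \<in> ncI"
proof -
  define l where "l = coeff p [X,Y,Y,Y,X,Y] / 2"
  define m where "m = coeff p w1 / 2"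
  define q where "q = p - ncsmult l pol5 - ncsmult m pol6"
  have conds: "coeff p [] = 0" "\<And>w. w \<in> set short_factors_w12 \<Longrightarrow> coeff p w = 0"
     "coeff p [Y,X,Y,Y,Y,X] = - coeff p [X,Y,Y,Y,X,Y]"
     "coeff p [Y,Y,X,Y,X,Y] = - coeff p [Y,X,Y,X,Y,Y]"
     "coeff p [Y,X,Y,X,Y,Y] = -5 * l" "coeff p w2 = -5 * m"
    using p two by (auto simp: I_coeff_conds_def w1_def w2_def l_def m_def field_simps
        eq_neg_iff_add_eq_0 add.commute)
  have pol5_short: "length w \<noteq> 6 \<Longrightarrow> coeff pol5 w = 0" for w
    by (auto simp: pol5_def lookup_add lookup_minus lookup_single when_def)
  have pol6_short: "length w \<noteq> 7 \<Longrightarrow> coeff pol6 w = 0" for w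
    by (auto simp: pol6_def w1_def w2_def lookup_add lookup_minus lookup_single when_def)
  have "coeff q w = 0" if "factor_w12 w" for w
  proof -
    have "w = [] \<or> w \<in> set short_factors_w12 \<or> w \<in> {[X,Y,Y,Y,X,Y], [Y,X,Y,X,Y,Y], [Y,X,Y,Y,Y,X],
          [Y,Y,X,Y,X,Y], w1, w2}"
      using that by (auto simp: factor_w12_iff set_factors_w12)
    moreover have "length w \<le> 5" if "w \<in> set short_factors_w12"
      using that by (simp add: short_factors_w12_def)
    ultimately show ?thesis
      using two conds by (auto simp: q_def lookup_minus coeff_ncsmult pol5_short pol6_short l_def m_def)
        (auto simp: pol5_def pol6_def w1_def w2_def lookup_add lookup_minus lookup_single)
  qed
  then have "q \<in> ncI" by (rule ncI_if_vanish_on_factors)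
  moreover have "pol5 \<in> ncI" "pol6 \<in> ncI"
    by (auto intro!: ncI_gensI simp: gensI_def)
  ultimately have "q + ncsmult l pol5 + ncsmult m pol6 \<in> ncI"
    by (intro ncI_add ncI_ncsmult)
  then show ?thesis by (simp add: q_def)
qed

section \<open>The Lie algebra \<open>[B]\<close> is 5-Engel\<close>

lemmas lie_eng_coeff_simps =
  lbr_eq numeral_eq_Suc lookup_minus coeff_times_Cons lie_eng_in_ncA ncA_times ncA_diff

lemma I_coeff_conds_lie_eng_5:
  assumes "u \<in> ncA" "v \<in> ncA"
  shows "I_coeff_conds (lie_eng 5 u v)"
proof -
  let ?c = "coeff (lie_eng 5 u v)"
  have "\<forall>w\<in>set short_factors_w12. ?c w = 0"
    using assms by (simp add: short_factors_w12_def factors_w12_def w1_def w2_def lie_eng_coeff_simps)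
  moreover have "?c [Y,X,Y,Y,Y,X] = - ?c [X,Y,Y,Y,X,Y]"
    using assms by (simp add: lie_eng_coeff_simps) algebra
  moreover have "?c [Y,Y,X,Y,X,Y] = - ?c [Y,X,Y,X,Y,Y]"
    using assms by (simp add: lie_eng_coeff_simps) algebra
  moreover have "5 * ?c [X,Y,Y,Y,X,Y] + 2 * ?c [Y,X,Y,X,Y,Y] = 0"
    using assms by (simp add: lie_eng_coeff_simps) algebra
  moreover have "5 * ?c [Y,X,Y,Y,Y,X,Y] + 2 * ?c [Y,Y,X,Y,X,Y,Y] = 0"
    using assms by (simp add: lie_eng_coeff_simps) algebra
  moreover have "?c [] = 0"
    using lie_eng_in_ncA[OF assms] by (simp add: ncA_def)
  ultimately show ?thesis by (simp add: I_coeff_conds_def)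
qed

lemma engel_lieB_5:
  assumes "(2::'a::field) \<noteq> 0"
  shows "engel_lieB TYPE('a) 5"
  unfolding engel_lieB_def
  using I_coeff_conds_lie_eng_5 ncI_if_I_coeff_conds[OF assms] by blast

section \<open>The adjoint group\<close>

lemma clsI_self: "a \<in> clsI a"
  unfolding clsI_def using ncI_zero by force

lemma mem_clsI_iff: "x \<in> clsI a \<longleftrightarrow> x - a \<in> ncI"
  unfolding clsI_def image_def by (auto intro: bexI[of _ "x - a"])

lemma clsI_eq_iff: "clsI a = clsI b \<longleftrightarrow> a - b \<in> ncI"
proof
  assume "clsI a = clsI b"
  then show "a - b \<in> ncI" using clsI_self[of a] by (simp add: mem_clsI_iff)
next
  assume "a - b \<in> ncI"
  then have "x - a \<in> ncI \<longleftrightarrow> x - b \<in> ncI" for x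
    by (metis ncI_add ncI_diff diff_add_cancel diff_diff_eq2 add_diff_eq)
  then show "clsI a = clsI b" unfolding set_eq_iff mem_clsI_iff by blast
qed

lemma circ_eq: "circ a b = a + b + a * b"
  by (simp add: circ_def ncmult_eq_times)

lemma circ_in_ncA: "a \<in> ncA \<Longrightarrow> b \<in> ncA \<Longrightarrow> circ a b \<in> ncA"
  by (simp add: circ_eq ncA_add ncA_times)

lemma circ_cong_ncI:
  assumes "a \<in> ncA" "b' \<in> ncA" "a' - a \<in> ncI" "b' - b \<in> ncI"
  shows "circ a' b' - circ a b \<in> ncI"
proof -
  have "circ a' b' - circ a b = (a' - a) + (b' - b) + ((a' - a) * b' + a * (b' - b))"
    by (simp add: circ_eq algebra_simps)
  also have "\<dots> \<in> ncI" using assms by (intro ncI_add ncI_times_right ncI_times_left)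
  finally show ?thesis .
qed

lemma mult_adjB_clsI:
  assumes "a \<in> ncA" "b \<in> ncA"
  shows "clsI a \<otimes>\<^bsub>adjB\<^esub> clsI b = clsI (circ a b)"
proof -
  define a' where "a' = (SOME x. x \<in> clsI a)"
  define b' where "b' = (SOME x. x \<in> clsI b)"
  have "a' - a \<in> ncI" "b' - b \<in> ncI"
    unfolding a'_def b'_def using someI[of "\<lambda>x. x \<in> clsI _", OF clsI_self] mem_clsI_iff by blast+
  moreover then have "b' \<in> ncA"
    using assms(2) ncA_add[OF ncI_subset_ncA] by (metis diff_add_cancel)
  ultimately have "circ a' b' - circ a b \<in> ncI"
    using assms(1) by (intro circ_cong_ncI)
  then show ?thesis by (simp add: adjB_def clsI_eq_iff a'_def b'_def)
qed

lemma carrier_adjB: "carrier adjB = clsI ` ncA"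
  by (simp add: adjB_def Bset_def)

lemma one_adjB: "\<one>\<^bsub>adjB\<^esub> = clsI 0"
  by (simp add: adjB_def)

lemma monoid_adjB: "monoid (adjB :: 'a::field ncpoly set monoid)"
proof (rule monoidI)
  fix x y :: "'a ncpoly set"
  assume "x \<in> carrier adjB" "y \<in> carrier adjB"
  then show "x \<otimes>\<^bsub>adjB\<^esub> y \<in> carrier adjB"
    by (auto simp: carrier_adjB mult_adjB_clsI circ_in_ncA)
next
  fix x y z :: "'a ncpoly set"
  assume "x \<in> carrier adjB" "y \<in> carrier adjB" "z \<in> carrier adjB"
  moreover have "circ (circ a b) c = circ a (circ b c)" for a b c :: "'a ncpoly"
    by (simp add: circ_eq algebra_simps)
  ultimately show "x \<otimes>\<^bsub>adjB\<^esub> y \<otimes>\<^bsub>adjB\<^esub> z = x \<otimes>\<^bsub>adjB\<^esub> (y \<otimes>\<^bsub>adjB\<^esub> z)"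
    by (auto simp: carrier_adjB mult_adjB_clsI circ_in_ncA)
qed (auto simp: carrier_adjB one_adjB mult_adjB_clsI ncA_zero circ_eq)

text \<open>\<open>pow_sum k b = b + b\<^sup>2 + \<dots> + b\<^sup>k\<^sup>+\<^sup>1\<close>; since \<open>b\<^sup>8 \<in> I\<close>, \<open>pow_sum 6 (-a)\<close> is an adjoint
  inverse of \<open>a\<close> modulo \<open>I\<close>.\<close>

primrec pow_sum :: "nat \<Rightarrow> 'a::field ncpoly \<Rightarrow> 'a ncpoly" where
  "pow_sum 0 b = b"
| "pow_sum (Suc k) b = b + b * pow_sum k b"

lemma pow_sum_commute: "pow_sum k b * b = b * pow_sum k b"
  by (induction k) (simp_all add: algebra_simps)

lemma pow_sum_telescope: "pow_sum n b - b - b * pow_sum n b = - (b ^ (n + 2))"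
proof (induction n)
  case (Suc n)
  have "pow_sum (Suc n) b - b - b * pow_sum (Suc n) b = b * (pow_sum n b - b - b * pow_sum n b)"
    by (simp add: algebra_simps)
  with Suc show ?case by simp
qed (simp add: power2_eq_square)

lemma pow_sum_in_ncA: "b \<in> ncA \<Longrightarrow> pow_sum n b \<in> ncA"
  by (induction n) (simp_all add: ncA_add ncA_times)

lemma coeff_power_short:
  assumes "b \<in> ncA" "length w < n"
  shows "coeff (b ^ n) w = 0"
  using assms(2)
proof (induction n arbitrary: w)
  case (Suc n)
  have "coeff b (take i w) * coeff (b ^ n) (drop i w) = 0" if "i \<le> length w" for i
    using that Suc assms(1) by (cases "i = 0") (auto simp: ncA_def)
  then show ?case by (simp only: power_Suc coeff_times) (rule sum.neutral, simp)
qed simp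

lemma power_8_in_ncI: "b \<in> ncA \<Longrightarrow> b ^ 8 \<in> ncI"
  by (rule ncI_if_vanish_on_factors) (auto intro!: coeff_power_short dest: length_factor_w12)

lemma adjoint_inverse_mod_ncI:
  assumes a: "a \<in> ncA"
  shows "circ a (pow_sum 6 (- a)) \<in> ncI" "circ (pow_sum 6 (- a)) a \<in> ncI"
proof -
  let ?b = "- a" and ?y = "pow_sum 6 (- a)"
  have b8: "- (?b ^ 8) \<in> ncI" using a by (intro ncI_uminus power_8_in_ncI ncA_uminus)
  have "circ a ?y = ?y - ?b - ?b * ?y" "circ ?y a = ?y - ?b - ?y * ?b"
    by (simp_all add: circ_eq algebra_simps)
  then show "circ a ?y \<in> ncI" "circ ?y a \<in> ncI"
    using b8 pow_sum_telescope[of 6 ?b] pow_sum_commute[of 6 ?b] by simp_all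
qed

lemma clsI_in_Units_adjB:
  assumes a: "a \<in> ncA"
  shows "clsI a \<in> Units adjB"
proof -
  let ?y = "pow_sum 6 (- a)"
  have y: "?y \<in> ncA" using a by (intro pow_sum_in_ncA ncA_uminus)
  have "clsI a \<otimes>\<^bsub>adjB\<^esub> clsI ?y = \<one>\<^bsub>adjB\<^esub>" "clsI ?y \<otimes>\<^bsub>adjB\<^esub> clsI a = \<one>\<^bsub>adjB\<^esub>"
    using adjoint_inverse_mod_ncI[OF a] by (simp_all add: mult_adjB_clsI a y one_adjB clsI_eq_iff)
  then show ?thesis unfolding Units_def using a y by (auto simp: carrier_adjB)
qed

lemma group_adjGroup: "group (adjGroup :: 'a::field ncpoly set monoid)"
  unfolding adjGroup_def by (rule monoid.units_group[OF monoid_adjB])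

lemma clsI_in_carrier_adjGroup: "a \<in> ncA \<Longrightarrow> clsI a \<in> carrier adjGroup"
  by (simp add: adjGroup_def units_of_carrier clsI_in_Units_adjB)

lemma mult_adjGroup_clsI:
  "a \<in> ncA \<Longrightarrow> b \<in> ncA \<Longrightarrow> clsI a \<otimes>\<^bsub>adjGroup\<^esub> clsI b = clsI (circ a b)"
  by (simp add: adjGroup_def units_of_mult mult_adjB_clsI)

lemma one_adjGroup: "\<one>\<^bsub>adjGroup\<^esub> = clsI 0"
  by (simp add: adjGroup_def units_of_one one_adjB)

lemma inv_adjGroup_clsI:
  assumes "a \<in> ncA" "c \<in> ncA" "circ c a \<in> ncI"
  shows "inv\<^bsub>adjGroup\<^esub> (clsI a) = clsI c"
  using assms by (intro group.inv_equality[OF group_adjGroup])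
    (simp_all add: mult_adjGroup_clsI one_adjGroup clsI_eq_iff clsI_in_carrier_adjGroup)

section \<open>Computing group commutators in \<open>B\<close>\<close>

text \<open>Elements of \<open>A\<close> with integer coefficients are represented by lists of
  (word, coefficient) pairs.  Products are truncated to words of length at most 7 and
  results are reduced to their coefficients on the factors of \<open>w1, w2\<close>; neither step
  changes the class modulo \<open>I\<close>, so the evaluation can be carried out by rewriting.\<close>

type_synonym coeff_list = "(gen list \<times> int) list"

definition cl_eval :: "coeff_list \<Rightarrow> 'a::field ncpoly" where
  "cl_eval P = sum_list (map (\<lambda>(w,c). Poly_Mapping.single w (of_int c)) P)"

definition cl_coeff :: "gen list \<Rightarrow> coeff_list \<Rightarrow> int" where
  "cl_coeff w P = sum_list (map snd (filter (\<lambda>x. fst x = w) P))"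

definition cl_noconst :: "coeff_list \<Rightarrow> bool" where
  "cl_noconst P \<longleftrightarrow> (\<forall>x\<in>set P. fst x \<noteq> [])"

definition cl_times_full :: "coeff_list \<Rightarrow> coeff_list \<Rightarrow> coeff_list" where
  "cl_times_full P Q = concat (map (\<lambda>(a,c). map (\<lambda>(b,d). (a @ b, c * d)) Q) P)"

definition cl_times :: "coeff_list \<Rightarrow> coeff_list \<Rightarrow> coeff_list" where
  "cl_times P Q = concat (map (\<lambda>(a,c). map (\<lambda>(b,d). (a @ b, c * d))
       (filter (\<lambda>(b,d). length a + length b \<le> 7) Q)) P)"

definition cl_neg :: "coeff_list \<Rightarrow> coeff_list" where
  "cl_neg P = map (\<lambda>(w,c). (w, - c)) P"

definition cl_reduce :: "coeff_list \<Rightarrow> coeff_list" where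
  "cl_reduce P = filter (\<lambda>x. snd x \<noteq> 0) (map (\<lambda>w. (w, cl_coeff w P)) factors_w12)"

lemma cl_eval_Nil [simp]: "cl_eval [] = 0"
  by (simp add: cl_eval_def)
lemma cl_eval_Cons [simp]: "cl_eval ((w,c) # P) = Poly_Mapping.single w (of_int c) + cl_eval P"
  by (simp add: cl_eval_def)
lemma cl_eval_append: "cl_eval (P @ Q) = cl_eval P + cl_eval Q"
  by (simp add: cl_eval_def)
lemma cl_eval_neg: "(cl_eval (cl_neg P) :: 'a::field ncpoly) = - cl_eval P"
  by (induction P) (auto simp: cl_neg_def single_uminus)

lemma coeff_cl_eval: "coeff (cl_eval P :: 'a::field ncpoly) w = of_int (cl_coeff w P)"
  by (induction P) (auto simp: cl_coeff_def lookup_add lookup_single when_def)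

lemma cl_coeff_Nil_if_noconst: "cl_noconst P \<Longrightarrow> cl_coeff [] P = 0"
  by (simp add: cl_coeff_def cl_noconst_def filter_empty_conv)

lemma cl_eval_in_ncA: "cl_noconst P \<Longrightarrow> cl_eval P \<in> ncA"
  by (simp add: ncA_def coeff_cl_eval cl_coeff_Nil_if_noconst)

lemma cl_noconst_append: "cl_noconst P \<Longrightarrow> cl_noconst Q \<Longrightarrow> cl_noconst (P @ Q)"
  by (auto simp: cl_noconst_def)
lemma cl_noconst_times: "cl_noconst P \<Longrightarrow> cl_noconst (cl_times P Q)"
  by (auto simp: cl_noconst_def cl_times_def)
lemma cl_noconst_neg: "cl_noconst P \<Longrightarrow> cl_noconst (cl_neg P)"
  by (auto simp: cl_noconst_def cl_neg_def)
lemma cl_noconst_reduce: "cl_noconst (cl_reduce P)"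
proof -
  have "[] \<notin> set factors_w12" by (simp add: factors_w12_def w1_def w2_def)
  then show ?thesis by (auto simp: cl_noconst_def cl_reduce_def)
qed

lemma cl_eval_times_full: "(cl_eval (cl_times_full P Q) :: 'a::field ncpoly) = cl_eval P * cl_eval Q"
proof -
  have "cl_eval (map (\<lambda>(b,d). (a @ b, c * d)) Q)
        = (Poly_Mapping.single a (of_int c) * cl_eval Q :: 'a ncpoly)" for a c
    by (induction Q) (auto simp: algebra_simps mult_single plus_list_def)
  then show ?thesis
    by (induction P) (auto simp: cl_times_full_def cl_eval_append algebra_simps)
qed

lemma cl_times_eq_filter: "cl_times P Q = filter (\<lambda>x. length (fst x) \<le> 7) (cl_times_full P Q)"
  by (induction P) (auto simp: cl_times_def cl_times_full_def filter_map comp_def split_def)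

lemma cl_times_mod_ncI: "cl_eval P * cl_eval Q - (cl_eval (cl_times P Q) :: 'a::field ncpoly) \<in> ncI"
proof (rule ncI_if_vanish_on_factors)
  fix w assume "factor_w12 w"
  then have "length w \<le> 7" by (rule length_factor_w12)
  then have "cl_coeff w (cl_times P Q) = cl_coeff w (cl_times_full P Q)"
    unfolding cl_times_eq_filter cl_coeff_def by (simp add: filter_filter) (metis (lifting) filter_cong)
  then show "coeff (cl_eval P * cl_eval Q - (cl_eval (cl_times P Q) :: 'a ncpoly)) w = 0"
    by (simp add: cl_eval_times_full[symmetric] lookup_minus coeff_cl_eval)
qed

lemma cl_coeff_filter_map:
  "distinct G \<Longrightarrow> cl_coeff w (filter (\<lambda>x. snd x \<noteq> 0) (map (\<lambda>v. (v, f v)) G))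
     = (if w \<in> set G then f w else 0)"
  by (induction G) (auto simp: cl_coeff_def)

lemma cl_coeff_reduce: "cl_coeff w (cl_reduce P) = (if w \<in> set factors_w12 then cl_coeff w P else 0)"
  unfolding cl_reduce_def by (rule cl_coeff_filter_map[OF distinct_factors_w12])

lemma cl_reduce_mod_ncI:
  assumes "cl_noconst P"
  shows "(cl_eval P :: 'a::field ncpoly) - cl_eval (cl_reduce P) \<in> ncI"
proof (rule ncI_if_vanish_on_factors)
  fix w assume "factor_w12 w"
  then show "coeff (cl_eval P - cl_eval (cl_reduce P) :: 'a ncpoly) w = 0"
    using assms by (auto simp: factor_w12_iff lookup_minus coeff_cl_eval cl_coeff_reduce
        cl_coeff_Nil_if_noconst)
qed

primrec cl_pow_sum :: "nat \<Rightarrow> coeff_list \<Rightarrow> coeff_list" where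
  "cl_pow_sum 0 B = B"
| "cl_pow_sum (Suc k) B = cl_reduce (B @ cl_times B (cl_pow_sum k B))"

lemma cl_pow_sum_mod_ncI:
  assumes B: "cl_noconst B"
  shows "cl_noconst (cl_pow_sum k B) \<and> (cl_eval (cl_pow_sum k B) :: 'a::field ncpoly) - pow_sum k (cl_eval B) \<in> ncI"
proof (induction k)
  case 0
  then show ?case using B by (simp add: ncI_zero)
next
  case (Suc k)
  let ?C = "B @ cl_times B (cl_pow_sum k B)"
  have "(cl_eval (cl_pow_sum (Suc k) B) :: 'a ncpoly) - pow_sum (Suc k) (cl_eval B)
      = - (cl_eval ?C - cl_eval (cl_reduce ?C))
        + (- (cl_eval B * cl_eval (cl_pow_sum k B) - cl_eval (cl_times B (cl_pow_sum k B))))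
        + cl_eval B * (cl_eval (cl_pow_sum k B) - pow_sum k (cl_eval B))"
    by (simp add: cl_eval_append algebra_simps)
  also have "\<dots> \<in> ncI"
    using Suc B by (intro ncI_add ncI_uminus ncI_times_left cl_reduce_mod_ncI cl_times_mod_ncI
        cl_noconst_append cl_noconst_times cl_eval_in_ncA) auto
  finally show ?case by (simp add: cl_noconst_reduce)
qed

definition cl_inv :: "coeff_list \<Rightarrow> coeff_list" where
  "cl_inv P = cl_pow_sum 6 (cl_neg P)"

definition cl_circ :: "coeff_list \<Rightarrow> coeff_list \<Rightarrow> coeff_list" where
  "cl_circ P Q = cl_reduce (P @ Q @ cl_times P Q)"

definition cl_comm :: "coeff_list \<Rightarrow> coeff_list \<Rightarrow> coeff_list" where
  "cl_comm P Q = cl_circ (cl_circ (cl_circ (cl_inv P) (cl_inv Q)) P) Q"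

primrec cl_engel :: "nat \<Rightarrow> coeff_list \<Rightarrow> coeff_list \<Rightarrow> coeff_list" where
  "cl_engel 0 P Q = P"
| "cl_engel (Suc k) P Q = cl_comm (cl_engel k P Q) Q"

lemma cl_noconst_inv: "cl_noconst P \<Longrightarrow> cl_noconst (cl_inv P)"
  unfolding cl_inv_def using cl_pow_sum_mod_ncI cl_noconst_neg by blast

lemma cl_noconst_circ: "cl_noconst (cl_circ P Q)"
  by (simp add: cl_circ_def cl_noconst_reduce)

lemma cl_noconst_engel: "cl_noconst P \<Longrightarrow> cl_noconst (cl_engel k P Q)"
  by (induction k) (simp_all add: cl_comm_def cl_noconst_circ)

lemma inv_adjGroup_cl_eval:
  assumes P: "cl_noconst P"
  shows "inv\<^bsub>adjGroup\<^esub> (clsI (cl_eval P :: 'a::field ncpoly)) = clsI (cl_eval (cl_inv P))"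
proof (rule inv_adjGroup_clsI)
  let ?a = "cl_eval P :: 'a ncpoly" and ?y = "pow_sum 6 (- cl_eval P) :: 'a ncpoly"
  have a: "?a \<in> ncA" using P by (rule cl_eval_in_ncA)
  have "(cl_eval (cl_pow_sum 6 (cl_neg P)) :: 'a ncpoly) - pow_sum 6 (cl_eval (cl_neg P)) \<in> ncI"
    using cl_pow_sum_mod_ncI[OF cl_noconst_neg[OF P]] by blast
  then have "cl_eval (cl_inv P) - ?y \<in> ncI"
    by (simp add: cl_inv_def cl_eval_neg)
  then have "circ (cl_eval (cl_inv P)) ?a - circ ?y ?a \<in> ncI"
    using a by (intro circ_cong_ncI pow_sum_in_ncA ncA_uminus) (simp_all add: ncI_zero)
  from ncI_add[OF this adjoint_inverse_mod_ncI(2)[OF a]]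
  show "circ (cl_eval (cl_inv P)) ?a \<in> ncI" by simp
qed (use P in \<open>simp_all add: cl_eval_in_ncA cl_noconst_inv\<close>)

lemma mult_adjGroup_cl_eval:
  assumes P: "cl_noconst P" and Q: "cl_noconst Q"
  shows "clsI (cl_eval P) \<otimes>\<^bsub>adjGroup\<^esub> clsI (cl_eval Q) = clsI (cl_eval (cl_circ P Q) :: 'a::field ncpoly)"
proof -
  let ?C = "P @ Q @ cl_times P Q"
  have "circ (cl_eval P) (cl_eval Q) - (cl_eval (cl_circ P Q) :: 'a ncpoly)
     = (cl_eval ?C - cl_eval (cl_reduce ?C)) + (cl_eval P * cl_eval Q - cl_eval (cl_times P Q))"
    by (simp add: cl_circ_def cl_eval_append circ_eq)
  also have "\<dots> \<in> ncI"
    using P Q by (intro ncI_add cl_reduce_mod_ncI cl_times_mod_ncI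
        cl_noconst_append cl_noconst_times)
  finally show ?thesis
    using P Q by (simp add: mult_adjGroup_clsI cl_eval_in_ncA clsI_eq_iff)
qed

lemma gcomm_adjGroup_cl_eval:
  assumes P: "cl_noconst P" and Q: "cl_noconst Q"
  shows "gcomm adjGroup (clsI (cl_eval P)) (clsI (cl_eval Q))
           = clsI (cl_eval (cl_comm P Q) :: 'a::field ncpoly)"
  unfolding gcomm_def cl_comm_def
  by (simp only: inv_adjGroup_cl_eval mult_adjGroup_cl_eval cl_noconst_inv cl_noconst_circ P Q)

lemma grp_eng_adjGroup_cl_eval:
  assumes P: "cl_noconst P" and Q: "cl_noconst Q"
  shows "grp_eng adjGroup k (clsI (cl_eval P)) (clsI (cl_eval Q))
           = clsI (cl_eval (cl_engel k P Q) :: 'a::field ncpoly)"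
  by (induction k)
    (simp_all only: grp_eng.simps cl_engel.simps gcomm_adjGroup_cl_eval cl_noconst_engel P Q)

definition xy_engel_table :: "coeff_list list" where
  "xy_engel_table = [
    [([X], 1)],
    [([X,Y], 1), ([Y,X], -1), ([X,Y,X], 1), ([Y,X,Y], -1), ([Y,Y,X], 1), ([X,Y,X,Y], 1),
      ([Y,Y,X,Y], 1), ([Y,Y,Y,X], -1), ([X,Y,Y,Y,X], 1), ([Y,Y,Y,X,Y], -1), ([X,Y,Y,Y,X,Y], 1)],
    [([X,Y,Y], 1), ([Y,X,Y], -2), ([Y,Y,X], 1), ([X,Y,X,Y], 1), ([Y,X,Y,X], -1),
      ([Y,X,Y,Y], -2), ([Y,Y,X,Y], 4), ([Y,Y,Y,X], -2), ([X,Y,Y,Y,X], -1), ([Y,X,Y,X,Y], -4),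
      ([Y,Y,X,Y,X], 1), ([Y,Y,Y,X,Y], -6), ([X,Y,Y,Y,X,Y], -3), ([Y,X,Y,X,Y,Y], -2),
      ([Y,X,Y,Y,Y,X], -2), ([Y,Y,X,Y,X,Y], 4), ([Y,X,Y,Y,Y,X,Y], -4), ([Y,Y,X,Y,X,Y,Y], 2)],
    [([X,Y,Y,Y], 1), ([Y,X,Y,Y], -3), ([Y,Y,X,Y], 3), ([Y,Y,Y,X], -1), ([X,Y,X,Y,Y], 1),
      ([Y,X,Y,X,Y], -2), ([Y,X,Y,Y,Y], -3), ([Y,Y,X,Y,X], 1), ([Y,Y,Y,X,Y], -9),
      ([X,Y,Y,Y,X,Y], -1), ([Y,X,Y,X,Y,Y], -5), ([Y,X,Y,Y,Y,X], 1), ([Y,Y,X,Y,X,Y], 7),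
      ([Y,X,Y,Y,Y,X,Y], 8), ([Y,Y,X,Y,X,Y,Y], 14)],
    [([Y,X,Y,Y,Y], -4), ([Y,Y,Y,X,Y], -4), ([Y,X,Y,X,Y,Y], -3), ([Y,Y,X,Y,X,Y], 3),
      ([Y,X,Y,Y,Y,X,Y], 2), ([Y,Y,X,Y,X,Y,Y], 15)],
    [([Y,Y,X,Y,X,Y,Y], 6)]]"

lemma xy_engel_table_step_0: "cl_comm (xy_engel_table ! 0) [([Y],1)] = xy_engel_table ! 1"
  unfolding xy_engel_table_def by code_simp

lemma xy_engel_table_step_1: "cl_comm (xy_engel_table ! 1) [([Y],1)] = xy_engel_table ! 2"
  unfolding xy_engel_table_def by code_simp

lemma xy_engel_table_step_2: "cl_comm (xy_engel_table ! 2) [([Y],1)] = xy_engel_table ! 3"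
  unfolding xy_engel_table_def by code_simp

lemma xy_engel_table_step_3: "cl_comm (xy_engel_table ! 3) [([Y],1)] = xy_engel_table ! 4"
  unfolding xy_engel_table_def by code_simp

lemma xy_engel_table_step_4: "cl_comm (xy_engel_table ! 4) [([Y],1)] = xy_engel_table ! 5"
  unfolding xy_engel_table_def by code_simp

lemma cl_engel_5_x_y: "cl_engel 5 [([X],1)] [([Y],1)] = xy_engel_table ! 5"
proof -
  let ?y = "[([Y],1)]"
  have "cl_engel 5 [([X],1)] ?y
      = cl_comm (cl_comm (cl_comm (cl_comm (cl_comm (xy_engel_table ! 0) ?y) ?y) ?y) ?y) ?y"
    by (simp add: numeral_eq_Suc xy_engel_table_def)
  also have "\<dots> = xy_engel_table ! 5"
    by (simp only: xy_engel_table_step_0 xy_engel_table_step_1 xy_engel_table_step_2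
        xy_engel_table_step_3 xy_engel_table_step_4)
  finally show ?thesis .
qed

lemma grp_eng_adjGroup_5_x_y:
  "grp_eng adjGroup 5 (clsI (mono [X])) (clsI (mono [Y]))
     = clsI (Poly_Mapping.single w2 (6::'a::field))"
proof -
  have xy: "cl_noconst [([X],1)]" "cl_noconst [([Y],1)]"
    by (simp_all add: cl_noconst_def)
  have "mono [X] = (cl_eval [([X],1)] :: 'a ncpoly)" "mono [Y] = (cl_eval [([Y],1)] :: 'a ncpoly)"
    "Poly_Mapping.single w2 (6::'a) = cl_eval (xy_engel_table ! 5)"
    by (simp_all add: mono_def xy_engel_table_def w2_def)
  then show ?thesis
    by (simp only: grp_eng_adjGroup_cl_eval[OF xy] cl_engel_5_x_y)
qed

lemma single_w2_in_ncI_imp: "Poly_Mapping.single w2 c \<in> ncI \<Longrightarrow> 2 * (c::'a::field) = 0"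
  by (auto dest!: I_coeff_conds_if_in_ncI simp: I_coeff_conds_def w1_def w2_def lookup_single)

lemma not_engel_group_adjGroup_5:
  assumes "(2::'a::field) \<noteq> 0" and "(3::'a) \<noteq> 0"
  shows "\<not> engel_group (adjGroup :: 'a ncpoly set monoid) 5"
proof
  assume "engel_group (adjGroup :: 'a ncpoly set monoid) 5"
  moreover have "clsI (mono [X] :: 'a ncpoly) \<in> carrier adjGroup" "clsI (mono [Y] :: 'a ncpoly) \<in> carrier adjGroup"
    by (simp_all add: clsI_in_carrier_adjGroup mono_in_ncA)
  ultimately have "grp_eng adjGroup 5 (clsI (mono [X])) (clsI (mono [Y])) = (clsI 0 :: 'a ncpoly set)"
    by (simp add: engel_group_def one_adjGroup)
  then have "Poly_Mapping.single w2 (6::'a) \<in> ncI"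
    by (simp add: grp_eng_adjGroup_5_x_y clsI_eq_iff)
  then have "(2::'a) * 6 = 0" by (rule single_w2_in_ncI_imp)
  moreover have "(2::'a) * 6 = 2 * 2 * 3" by simp
  ultimately show False using assms by (metis mult_eq_0_iff)
qed

theorem theorem1p2:
  assumes "(2::'a::field) \<noteq> 0" and "(3::'a) \<noteq> 0"
  shows "engel_lieB TYPE('a) 5 \<and> \<not> engel_group (adjGroup :: 'a ncpoly set monoid) 5"
  using engel_lieB_5[OF assms(1)] not_engel_group_adjGroup_5[OF assms] by blast

end
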